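(* Consider the reciprocal recommendation model described in the context. If a recommendation policy $(\mathbf{A}^*,\mathbf{B}^* )$ is socially optimal, i.e. it maximizes $\mathrm{SW}(\mathbf{A},\mathbf{B})$ over all recommendation policies $(\mathbf{A},\mathbf{B})$, then $(\mathbf{A}^*,\mathbf{B}^* )$ is mutually Pareto optimal.
   Context: Let $n,m$ be positive integers, with left-side agents $a_1,\dots,a_n$ and right-side agents $b_1,\dots,b_m$. For each pair $(i,j)\in[n]\times[m]$ we are given $\hat p_1(i,j)\in[0,1]$ and $\hat p_2(j,i)\in[0,1]$, and we set $p_{ij}=\hat p_1(i,j)\hat p_2(j,i)$. Let $e:\{1,2,\dots\}\to[0,\infty)$ be a non-increasing examination function and set $e_{k\ell}=e(k)e(\ell)$. A recommendation policy is a pair $(\mathbf{A},\mathbf{B})$ with $\mathbf{A}=(A_1,\dots,A_n)$, each $A_i\in\mathbb{R}_{\ge0}^{m\times m}$ doubly stochastic (all row and column sums equal $1$), and $\mathbf{B}=(B_1,\dots,B_m)$, each $B_j\in\mathbb{R}_{\ge0}^{n\times n}$ doubly stochastic. The utilities are $U_i(\mathbf{A},\mathbf{B})=\sum_{j=1}^m p_{ij}\sum_{k=1}^m\sum_{\ell=1}^n e_{k\ell}A_i(j,k)B_j(i,\ell)$ for $i\in[n]$ and $V_j(\mathbf{A},\mathbf{B})=\sum_{i=1}^n p_{ij}\sum_{k=1}^m\sum_{\ell=1}^n e_{k\ell}A_i(j,k)B_j(i,\ell)$ for $j\in[m]$. The social welfare is $\mathrm{SW}(\mathbf{A},\mathbf{B})=\sum_{i=1}^n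 U_i(\mathbf{A},\mathbf{B})=\sum_{j=1}^m V_j(\mathbf{A},\mathbf{B})$. Pareto optimality: given $\mathbf{A}$, $\mathbf{B}$ is Pareto dominated for the left side by $\mathbf{B}'$ (another tuple of $n\times n$ doubly stochastic matrices) if $U_i(\mathbf{A},\mathbf{B}')\ge U_i(\mathbf{A},\mathbf{B})$ for all $i\in[n]$ with strict inequality for at least one $i$; $\mathbf{B}$ is Pareto optimal for the left side given $\mathbf{A}$ if no such $\mathbf{B}'$ exists. Analogously, given $\mathbf{B}$, $\mathbf{A}$ is Pareto optimal for the right side if there is no tuple $\mathbf{A}'$ of $m\times m$ doubly stochastic matrices with $V_j(\mathbf{A}',\mathbf{B})\ge V_j(\mathbf{A},\mathbf{B})$ for all $j\in[m]$, strictly for some $j$. A policy $(\mathbf{A},\mathbf{B})$ is mutually Pareto optimal if $\mathbf{A}$ is Pareto optimal given $\mathbf{B}$ and $\mathbf{B}$ is Pareto optimal given $\mathbf{A}$. *)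

theory Defs
  imports Main "HOL.Real"
begin

(* Conventions: agents, positions are 1-based.  Left agents i in {1..n}, right agents j in {1..m}.
   A policy A :: nat => nat => nat => real with A i j k = A_i(j,k) (i in 1..n, j,k in 1..m);
   B :: nat => nat => nat => real with B j i l = B_j(i,l) (j in 1..m, i,l in 1..n).
   Values outside these ranges are irrelevant. *)

definition doubly_stochastic :: "nat \<Rightarrow> (nat \<Rightarrow> nat \<Rightarrow> real) \<Rightarrow> bool" where
  "doubly_stochastic d M \<longleftrightarrow>
     (\<forall>r\<in>{1..d}. \<forall>c\<in>{1..d}. 0 \<le> M r c) \<and>
     (\<forall>r\<in>{1..d}. (\<Sum>c=1..d. M r c) = 1) \<and>
     (\<forall>c\<in>{1..d}. (\<Sum>r=1..d. M r c) = 1)"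

definition valid_A :: "nat \<Rightarrow> nat \<Rightarrow> (nat \<Rightarrow> nat \<Rightarrow> nat \<Rightarrow> real) \<Rightarrow> bool" where
  "valid_A n m A \<longleftrightarrow> (\<forall>i\<in>{1..n}. doubly_stochastic m (A i))"

definition valid_B :: "nat \<Rightarrow> nat \<Rightarrow> (nat \<Rightarrow> nat \<Rightarrow> nat \<Rightarrow> real) \<Rightarrow> bool" where
  "valid_B n m B \<longleftrightarrow> (\<forall>j\<in>{1..m}. doubly_stochastic n (B j))"

definition pmatch :: "(nat \<Rightarrow> nat \<Rightarrow> real) \<Rightarrow> (nat \<Rightarrow> nat \<Rightarrow> real) \<Rightarrow> nat \<Rightarrow> nat \<Rightarrow> real" where
  "pmatch p1 p2 i j = p1 i j * p2 j i"

definition exam_term :: "nat \<Rightarrow> nat \<Rightarrow> (nat \<Rightarrow> real) \<Rightarrow> (nat \<Rightarrow> nat \<Rightarrow> nat \<Rightarrow> real)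
    \<Rightarrow> (nat \<Rightarrow> nat \<Rightarrow> nat \<Rightarrow> real) \<Rightarrow> nat \<Rightarrow> nat \<Rightarrow> real" where
  "exam_term n m e A B i j = (\<Sum>k=1..m. \<Sum>l=1..n. e k * e l * A i j k * B j i l)"

definition U :: "nat \<Rightarrow> nat \<Rightarrow> (nat \<Rightarrow> nat \<Rightarrow> real) \<Rightarrow> (nat \<Rightarrow> nat \<Rightarrow> real) \<Rightarrow> (nat \<Rightarrow> real)
    \<Rightarrow> (nat \<Rightarrow> nat \<Rightarrow> nat \<Rightarrow> real) \<Rightarrow> (nat \<Rightarrow> nat \<Rightarrow> nat \<Rightarrow> real) \<Rightarrow> nat \<Rightarrow> real" where
  "U n m p1 p2 e A B i = (\<Sum>j=1..m. pmatch p1 p2 i j * exam_term n m e A B i j)"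

definition V :: "nat \<Rightarrow> nat \<Rightarrow> (nat \<Rightarrow> nat \<Rightarrow> real) \<Rightarrow> (nat \<Rightarrow> nat \<Rightarrow> real) \<Rightarrow> (nat \<Rightarrow> real)
    \<Rightarrow> (nat \<Rightarrow> nat \<Rightarrow> nat \<Rightarrow> real) \<Rightarrow> (nat \<Rightarrow> nat \<Rightarrow> nat \<Rightarrow> real) \<Rightarrow> nat \<Rightarrow> real" where
  "V n m p1 p2 e A B j = (\<Sum>i=1..n. pmatch p1 p2 i j * exam_term n m e A B i j)"

definition SW :: "nat \<Rightarrow> nat \<Rightarrow> (nat \<Rightarrow> nat \<Rightarrow> real) \<Rightarrow> (nat \<Rightarrow> nat \<Rightarrow> real) \<Rightarrow> (nat \<Rightarrow> real)
    \<Rightarrow> (nat \<Rightarrow> nat \<Rightarrow> nat \<Rightarrow> real) \<Rightarrow> (nat \<Rightarrow> nat \<Rightarrow> nat \<Rightarrow> real) \<Rightarrow> real" where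
  "SW n m p1 p2 e A B = (\<Sum>i=1..n. U n m p1 p2 e A B i)"

definition pareto_opt_left where
  "pareto_opt_left n m p1 p2 e A B \<longleftrightarrow>
     \<not> (\<exists>B'. valid_B n m B' \<and>
            (\<forall>i\<in>{1..n}. U n m p1 p2 e A B' i \<ge> U n m p1 p2 e A B i) \<and>
            (\<exists>i\<in>{1..n}. U n m p1 p2 e A B' i > U n m p1 p2 e A B i))"

definition pareto_opt_right where
  "pareto_opt_right n m p1 p2 e A B \<longleftrightarrow>
     \<not> (\<exists>A'. valid_A n m A' \<and>
            (\<forall>j\<in>{1..m}. V n m p1 p2 e A' B j \<ge> V n m p1 p2 e A B j) \<and>
            (\<exists>j\<in>{1..m}. V n m p1 p2 e A' B j > V n m p1 p2 e A B j))"

definition mutually_pareto_optimal where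
  "mutually_pareto_optimal n m p1 p2 e A B \<longleftrightarrow>
     pareto_opt_right n m p1 p2 e A B \<and> pareto_opt_left n m p1 p2 e A B"

end

theory Submission
  imports Defs
begin

(* Social welfare is both the sum of the left utilities and the sum of the right utilities,
   so a Pareto improvement for either side strictly raises it.  Hence a welfare maximiser is
   mutually Pareto optimal. *)

lemma SW_eq_sum_V: "SW n m p1 p2 e A B = (\<Sum>j=1..m. V n m p1 p2 e A B j)"
  unfolding SW_def U_def V_def by (rule sum.swap)

lemma pareto_opt_left_if_SW_maximal:
  assumes "\<forall>B'. valid_B n m B' \<longrightarrow> SW n m p1 p2 e A B' \<le> SW n m p1 p2 e A B"
  shows "pareto_opt_left n m p1 p2 e A B"
  unfolding pareto_opt_left_def
proof
  assume "\<exists>B'. valid_B n m B' \<and>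
            (\<forall>i\<in>{1..n}. U n m p1 p2 e A B' i \<ge> U n m p1 p2 e A B i) \<and>
            (\<exists>i\<in>{1..n}. U n m p1 p2 e A B' i > U n m p1 p2 e A B i)"
  then obtain B' where "valid_B n m B'"
    and le: "\<forall>i\<in>{1..n}. U n m p1 p2 e A B' i \<ge> U n m p1 p2 e A B i"
    and lt: "\<exists>i\<in>{1..n}. U n m p1 p2 e A B' i > U n m p1 p2 e A B i" by blast
  have "SW n m p1 p2 e A B < SW n m p1 p2 e A B'"
    unfolding SW_def using le lt by (intro sum_strict_mono_ex1) auto
  with assms \<open>valid_B n m B'\<close> show False by force
qed

lemma pareto_opt_right_if_SW_maximal:
  assumes "\<forall>A'. valid_A n m A' \<longrightarrow> SW n m p1 p2 e A' B \<le> SW n m p1 p2 e A B"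
  shows "pareto_opt_right n m p1 p2 e A B"
  unfolding pareto_opt_right_def
proof
  assume "\<exists>A'. valid_A n m A' \<and>
            (\<forall>j\<in>{1..m}. V n m p1 p2 e A' B j \<ge> V n m p1 p2 e A B j) \<and>
            (\<exists>j\<in>{1..m}. V n m p1 p2 e A' B j > V n m p1 p2 e A B j)"
  then obtain A' where "valid_A n m A'"
    and le: "\<forall>j\<in>{1..m}. V n m p1 p2 e A' B j \<ge> V n m p1 p2 e A B j"
    and lt: "\<exists>j\<in>{1..m}. V n m p1 p2 e A' B j > V n m p1 p2 e A B j" by blast
  have "SW n m p1 p2 e A B < SW n m p1 p2 e A' B"
    unfolding SW_eq_sum_V using le lt by (intro sum_strict_mono_ex1) auto
  with assms \<open>valid_A n m A'\<close> show False by force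
qed

theorem proposition3p5:
  fixes n m :: nat
    and p1 p2 :: "nat \<Rightarrow> nat \<Rightarrow> real"
    and e :: "nat \<Rightarrow> real"
    and As Bs :: "nat \<Rightarrow> nat \<Rightarrow> nat \<Rightarrow> real"
  assumes "0 < n" and "0 < m"
    and "\<forall>i\<in>{1..n}. \<forall>j\<in>{1..m}. 0 \<le> p1 i j \<and> p1 i j \<le> 1"
    and "\<forall>i\<in>{1..n}. \<forall>j\<in>{1..m}. 0 \<le> p2 j i \<and> p2 j i \<le> 1"
    and "\<forall>k\<ge>1. 0 \<le> e k"
    and "\<forall>k l. 1 \<le> k \<longrightarrow> k \<le> l \<longrightarrow> e l \<le> e k"
    and "valid_A n m As" and "valid_B n m Bs"
    and "\<forall>A B. valid_A n m A \<longrightarrow> valid_B n m B \<longrightarrow>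
           SW n m p1 p2 e A B \<le> SW n m p1 p2 e As Bs"
  shows "mutually_pareto_optimal n m p1 p2 e As Bs"
proof -
  have "pareto_opt_right n m p1 p2 e As Bs"
    using assms(8,9) by (intro pareto_opt_right_if_SW_maximal) blast
  moreover have "pareto_opt_left n m p1 p2 e As Bs"
    using assms(7,9) by (intro pareto_opt_left_if_SW_maximal) blast
  ultimately show ?thesis
    unfolding mutually_pareto_optimal_def ..
qed

end
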